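(* Let $I\subset S=K[x_1,\dots,x_t]$ be an $\mathfrak m$-primary monomial ideal. Then there exists $s_0$ such that $v(I^{s+1})\ge v(I)$ for all $s\ge s_0$.
   Context: $K$ is a field, $S$ is standard graded and $\mathfrak m=\langle x_1,\dots,x_t\rangle$. For a proper graded ideal $I$, the $v$-number is $v(I)=\min\{k\ge 0 : \exists f\in S_k,\ \mathcal P\in\operatorname{Ass}(S/I) \text{ with } (I:f)=\mathcal P\}$. *)

theory Defs
  imports Main "HOL-Library.Poly_Mapping"
begin

text \<open>The polynomial ring S = K[x_v : v in 'v] over a field K, with a finite type 'v of
variables (t = CARD('v)).\<close>

type_synonym ('v, 'k) mpoly = "('v \<Rightarrow>\<^sub>0 nat) \<Rightarrow>\<^sub>0 'k"

definition is_ideal :: "('a::comm_ring_1) set \<Rightarrow> bool" where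
  "is_ideal I \<longleftrightarrow> 0 \<in> I \<and> (\<forall>a\<in>I. \<forall>b\<in>I. a + b \<in> I) \<and> (\<forall>a\<in>I. \<forall>r. r * a \<in> I)"

definition ideal_gen :: "('a::comm_ring_1) set \<Rightarrow> 'a set" where
  "ideal_gen G = \<Inter>{J. is_ideal J \<and> G \<subseteq> J}"

definition ideal_prod :: "('a::comm_ring_1) set \<Rightarrow> 'a set \<Rightarrow> 'a set" where
  "ideal_prod I J = ideal_gen {a * b | a b. a \<in> I \<and> b \<in> J}"

fun ideal_pow :: "('a::comm_ring_1) set \<Rightarrow> nat \<Rightarrow> 'a set" where
  "ideal_pow I 0 = UNIV"
| "ideal_pow I (Suc n) = ideal_prod I (ideal_pow I n)"

definition colon :: "('a::comm_ring_1) set \<Rightarrow> 'a \<Rightarrow> 'a set" where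
  "colon I f = {g. g * f \<in> I}"

definition radical :: "('a::comm_ring_1) set \<Rightarrow> 'a set" where
  "radical I = {f. \<exists>n. f ^ n \<in> I}"

definition prime_ideal :: "('a::comm_ring_1) set \<Rightarrow> bool" where
  "prime_ideal P \<longleftrightarrow> is_ideal P \<and> P \<noteq> UNIV \<and> (\<forall>a b. a * b \<in> P \<longrightarrow> a \<in> P \<or> b \<in> P)"

definition primary_ideal :: "('a::comm_ring_1) set \<Rightarrow> bool" where
  "primary_ideal Q \<longleftrightarrow> is_ideal Q \<and> Q \<noteq> UNIV \<and>
     (\<forall>a b. a * b \<in> Q \<longrightarrow> a \<notin> Q \<longrightarrow> b \<in> radical Q)"

definition Ass :: "('a::comm_ring_1) set \<Rightarrow> 'a set set" where
  "Ass I = {P. prime_ideal P \<and> (\<exists>f. colon I f = P)}"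

definition mono_deg :: "('v::finite \<Rightarrow>\<^sub>0 nat) \<Rightarrow> nat" where
  "mono_deg \<alpha> = (\<Sum>v\<in>UNIV. Poly_Mapping.lookup \<alpha> v)"

text \<open>f \<in> S_k: f is homogeneous of degree k (standard grading, 0 belongs to every S_k).\<close>
definition homogeneous :: "nat \<Rightarrow> ('v::finite, 'k::field) mpoly \<Rightarrow> bool" where
  "homogeneous k f \<longleftrightarrow> (\<forall>\<alpha>\<in>Poly_Mapping.keys f. mono_deg \<alpha> = k)"

definition var :: "'v \<Rightarrow> ('v, 'k::field) mpoly" where
  "var v = Poly_Mapping.single (Poly_Mapping.single v 1) 1"

definition is_monomial :: "('v, 'k::field) mpoly \<Rightarrow> bool" where
  "is_monomial f \<longleftrightarrow> (\<exists>\<alpha>. f = Poly_Mapping.single \<alpha> 1)"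

definition monomial_ideal :: "('v, 'k::field) mpoly set \<Rightarrow> bool" where
  "monomial_ideal I \<longleftrightarrow> (\<exists>G. (\<forall>g\<in>G. is_monomial g) \<and> I = ideal_gen G)"

definition max_ideal :: "('v, 'k::field) mpoly set" where
  "max_ideal = ideal_gen (range var)"

definition m_primary :: "('v, 'k::field) mpoly set \<Rightarrow> bool" where
  "m_primary I \<longleftrightarrow> primary_ideal I \<and> radical I = max_ideal"

definition v_number :: "('v::finite, 'k::field) mpoly set \<Rightarrow> nat" where
  "v_number I = (LEAST k. \<exists>f P. homogeneous k f \<and> P \<in> Ass I \<and> colon I f = P)"

end

theory Submission
  imports Defs
begin

text \<open>Since \<open>I \<subseteq> m\<close>, every term of an element of \<open>I^(s+1)\<close> has degree at least
\<open>s + 1\<close>. If \<open>(I^(s+1) : f) = P\<close> is prime with \<open>f \<noteq> 0\<close> homogeneous of degree \<open>k\<close>,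
then \<open>P\<close> contains every variable \<open>x\<^sub>v\<close>, since some power of \<open>x\<^sub>v\<close> lies in \<open>I^(s+1)\<close>;
so \<open>x\<^sub>v f \<in> I^(s+1)\<close> gives \<open>k + 1 \<ge> s + 1\<close>. Hence \<open>v(I^(s+1)) \<ge> s\<close>, and
\<open>s\<^sub>0 = v(I)\<close> works. The minimum defining the v-number is attained: all monomials of large
degree lie in \<open>I^(s+1)\<close>, and a monomial \<open>x\<^sup>\<alpha>\<close> of maximal degree outside it has
\<open>(I^(s+1) : x\<^sup>\<alpha>) = m\<close>. The argument never uses that \<open>I\<close> is a monomial ideal.\<close>

lemma is_ideal_ideal_gen: "is_ideal (ideal_gen G)"
  unfolding ideal_gen_def is_ideal_def by auto

lemma ideal_gen_superset: "G \<subseteq> ideal_gen G"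
  unfolding ideal_gen_def by auto

lemma ideal_gen_minimal: "is_ideal J \<Longrightarrow> G \<subseteq> J \<Longrightarrow> ideal_gen G \<subseteq> J"
  unfolding ideal_gen_def by auto

lemma ideal_zero: "is_ideal J \<Longrightarrow> 0 \<in> J"
  unfolding is_ideal_def by auto

lemma ideal_add: "is_ideal J \<Longrightarrow> a \<in> J \<Longrightarrow> b \<in> J \<Longrightarrow> a + b \<in> J"
  unfolding is_ideal_def by auto

lemma ideal_mult_left: "is_ideal J \<Longrightarrow> a \<in> J \<Longrightarrow> r * a \<in> J"
  unfolding is_ideal_def by auto

lemma ideal_mult_right: "is_ideal J \<Longrightarrow> a \<in> J \<Longrightarrow> a * r \<in> J"
  unfolding is_ideal_def by (metis mult.commute)

lemma ideal_diff: "is_ideal J \<Longrightarrow> a \<in> J \<Longrightarrow> b \<in> J \<Longrightarrow> a - b \<in> J"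
  using ideal_add[of J a "(-1) * b"] ideal_mult_left[of J b "-1"] by simp

lemma ideal_sum: "is_ideal J \<Longrightarrow> (\<And>i. i \<in> A \<Longrightarrow> f i \<in> J) \<Longrightarrow> sum f A \<in> J"
  by (induction A rule: infinite_finite_induct) (simp_all add: ideal_zero ideal_add)

lemma ideal_eq_UNIV_if_one_mem: "is_ideal J \<Longrightarrow> 1 \<in> J \<Longrightarrow> J = UNIV"
  using ideal_mult_left[of J 1] by auto

lemma ideal_prod_mem: "a \<in> I \<Longrightarrow> b \<in> J \<Longrightarrow> a * b \<in> ideal_prod I J"
  unfolding ideal_prod_def by (rule subsetD[OF ideal_gen_superset]) blast

lemma ideal_prod_minimal:
  "is_ideal L \<Longrightarrow> (\<And>a b. a \<in> I \<Longrightarrow> b \<in> J \<Longrightarrow> a * b \<in> L) \<Longrightarrow> ideal_prod I J \<subseteq> L"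
  unfolding ideal_prod_def by (rule ideal_gen_minimal) blast+

lemma is_ideal_ideal_pow: "is_ideal (ideal_pow I m)"
  by (cases m) (simp add: is_ideal_def, simp add: ideal_prod_def is_ideal_ideal_gen)

lemma power_mem_ideal_pow: "a \<in> I \<Longrightarrow> a ^ m \<in> ideal_pow I m"
  by (induction m) (simp_all add: ideal_prod_mem)

lemma is_ideal_colon: "is_ideal J \<Longrightarrow> is_ideal (colon J f)"
  unfolding is_ideal_def colon_def by (auto simp: distrib_right mult.assoc)

lemma ideal_subset_colon: "is_ideal J \<Longrightarrow> J \<subseteq> colon J f"
  unfolding colon_def using ideal_mult_right by blast

lemma prime_ideal_power_mem: "prime_ideal P \<Longrightarrow> x ^ n \<in> P \<Longrightarrow> x \<in> P"
  by (induction n) (auto simp: prime_ideal_def dest: ideal_eq_UNIV_if_one_mem)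

lemma mono_deg_add: "mono_deg (\<alpha> + \<beta>) = mono_deg \<alpha> + mono_deg \<beta>"
  unfolding mono_deg_def by (simp add: lookup_add sum.distrib)

lemma mono_deg_single [simp]: "mono_deg (Poly_Mapping.single (v::'v::finite) k) = k"
  unfolding mono_deg_def by (simp add: lookup_single when_def)

lemma mono_deg_eq_0_iff: "mono_deg \<alpha> = 0 \<longleftrightarrow> \<alpha> = 0"
  unfolding mono_deg_def by (auto intro: poly_mapping_eqI)

lemma exists_lookup_ge_if_mono_deg_ge:
  fixes \<alpha> :: "'v::finite \<Rightarrow>\<^sub>0 nat"
  assumes "card (UNIV :: 'v set) * K \<le> mono_deg \<alpha>"
  shows "\<exists>v. K \<le> Poly_Mapping.lookup \<alpha> v"
proof (rule ccontr)
  assume "\<not> ?thesis"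
  then have "(\<Sum>v\<in>UNIV. Poly_Mapping.lookup \<alpha> v) < (\<Sum>v\<in>(UNIV::'v set). K)"
    by (intro sum_strict_mono) (auto simp: not_le)
  with assms show False
    unfolding mono_deg_def by simp
qed

text \<open>The ideal \<open>m\<^sup>n\<close>, described through the degrees of the terms of its elements.\<close>

definition order_ge :: "nat \<Rightarrow> ('v::finite, 'k::comm_ring_1) mpoly set" where
  "order_ge n = {f. \<forall>\<alpha>\<in>Poly_Mapping.keys f. n \<le> mono_deg \<alpha>}"

lemma order_ge_0: "order_ge 0 = UNIV"
  unfolding order_ge_def by auto

lemma order_ge_1_eq:
  "(order_ge 1 :: ('v::finite, 'k::comm_ring_1) mpoly set) = {f. Poly_Mapping.lookup f 0 = 0}"
proof -
  have "1 \<le> mono_deg \<alpha> \<longleftrightarrow> \<alpha> \<noteq> 0" for \<alpha> :: "'v \<Rightarrow>\<^sub>0 nat"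
    using mono_deg_eq_0_iff[of \<alpha>] by linarith
  then have "(\<forall>\<alpha>\<in>Poly_Mapping.keys f. 1 \<le> mono_deg \<alpha>) \<longleftrightarrow> 0 \<notin> Poly_Mapping.keys f"
    for f :: "('v, 'k) mpoly"
    by blast
  then show ?thesis
    unfolding order_ge_def in_keys_iff by blast
qed

lemma one_not_in_order_ge: "1 \<notin> order_ge (Suc n)"
  unfolding order_ge_def by (simp add: mono_deg_def)

lemma order_ge_mult: "a \<in> order_ge m \<Longrightarrow> b \<in> order_ge n \<Longrightarrow> a * b \<in> order_ge (m + n)"
  unfolding order_ge_def using keys_mult[of a b] by (fastforce simp: mono_deg_add)

lemma is_ideal_order_ge: "is_ideal (order_ge n :: ('v::finite, 'k::comm_ring_1) mpoly set)"
  unfolding is_ideal_def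
proof (intro conjI ballI allI)
  fix a b :: "('v, 'k) mpoly" assume "a \<in> order_ge n" "b \<in> order_ge n"
  then show "a + b \<in> order_ge n"
    unfolding order_ge_def using keys_add[of a b] by auto
next
  fix a r :: "('v, 'k) mpoly" assume "a \<in> order_ge n"
  then show "r * a \<in> order_ge n"
    using order_ge_mult[of r 0 a n] by (simp add: order_ge_0)
qed (simp add: order_ge_def)

lemma ideal_pow_subset_order_ge: "I \<subseteq> order_ge d \<Longrightarrow> ideal_pow I m \<subseteq> order_ge (d * m)"
proof (induction m)
  case 0
  then show ?case by (simp add: order_ge_0)
next
  case (Suc m)
  then have "ideal_prod I (ideal_pow I m) \<subseteq> order_ge (d + d * m)"
    by (intro ideal_prod_minimal is_ideal_order_ge order_ge_mult) auto
  then show ?case by simp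
qed

lemma var_power: "var v ^ k = Poly_Mapping.single (Poly_Mapping.single v k) 1"
proof (induction k)
  case (Suc k)
  then show ?case
    by (simp add: var_def mult_single flip: single_add)
qed simp

lemma monomial_eq_times_var_power:
  assumes "k \<le> Poly_Mapping.lookup \<alpha> v"
  shows "(Poly_Mapping.single \<alpha> c :: ('v, 'k::field) mpoly) =
    Poly_Mapping.single (\<alpha> - Poly_Mapping.single v k) c * var v ^ k"
proof -
  have "\<alpha> = (\<alpha> - Poly_Mapping.single v k) + Poly_Mapping.single v k"
    using assms by (intro poly_mapping_eqI) (auto simp: lookup_add lookup_minus lookup_single when_def)
  then show ?thesis
    by (metis mult_single mult.right_neutral var_power)
qed

lemma lookup_var_mult:
  "Poly_Mapping.lookup (var v * f) (Poly_Mapping.single v 1 + \<alpha>) = Poly_Mapping.lookup f \<alpha>"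
  unfolding var_def lookup_mult lookup_single by (simp add: when_mult mult_when)

lemma lookup_mult_zero:
  fixes a b :: "('v, 'k::comm_semiring_1) mpoly"
  shows "Poly_Mapping.lookup (a * b) 0 = Poly_Mapping.lookup a 0 * Poly_Mapping.lookup b 0"
proof -
  have sum_zero: "(0 = l + q) \<longleftrightarrow> l = 0 \<and> q = 0" for l q :: "'v \<Rightarrow>\<^sub>0 nat"
    by (metis add_is_0 lookup_add lookup_zero poly_mapping_eqI)
  have "Poly_Mapping.lookup (a * b) 0 =
      (\<Sum>l. Poly_Mapping.lookup a l * (\<Sum>q. Poly_Mapping.lookup b q when l = 0 \<and> q = 0))"
    unfolding lookup_mult sum_zero ..
  also have "\<dots> = (\<Sum>l. Poly_Mapping.lookup a l * Poly_Mapping.lookup b 0 when l = 0)"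
  proof (rule Sum_any.cong)
    fix l :: "'v \<Rightarrow>\<^sub>0 nat"
    show "Poly_Mapping.lookup a l * (\<Sum>q. Poly_Mapping.lookup b q when l = 0 \<and> q = 0) =
        (Poly_Mapping.lookup a l * Poly_Mapping.lookup b 0 when l = 0)"
      by (cases "l = 0") simp_all
  qed
  finally show ?thesis
    by simp
qed

lemma sum_single_lookup_keys:
  "(\<Sum>\<alpha>\<in>Poly_Mapping.keys f. Poly_Mapping.single \<alpha> (Poly_Mapping.lookup f \<alpha>)) = f"
  by (rule poly_mapping_eqI) (simp add: lookup_sum lookup_single when_def in_keys_iff)

lemma is_ideal_max_ideal: "is_ideal max_ideal"
  unfolding max_ideal_def by (rule is_ideal_ideal_gen)

lemma var_mem_max_ideal: "var v \<in> max_ideal"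
  unfolding max_ideal_def using ideal_gen_superset by blast

lemma single_mem_max_ideal:
  assumes "\<alpha> \<noteq> 0"
  shows "(Poly_Mapping.single \<alpha> c :: ('v, 'k::field) mpoly) \<in> max_ideal"
proof -
  obtain v where "Poly_Mapping.lookup \<alpha> v \<noteq> 0"
    using assms by (metis lookup_zero poly_mapping_eqI)
  then have "Poly_Mapping.single \<alpha> c = Poly_Mapping.single (\<alpha> - Poly_Mapping.single v 1) c * var v"
    using monomial_eq_times_var_power[of 1 \<alpha> v c] by simp
  then show ?thesis
    using ideal_mult_left[OF is_ideal_max_ideal var_mem_max_ideal] by simp
qed

lemma max_ideal_eq: "max_ideal = {f :: ('v::finite, 'k::field) mpoly. Poly_Mapping.lookup f 0 = 0}"
proof
  have "range var \<subseteq> (order_ge 1 :: ('v, 'k) mpoly set)"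
    by (auto simp: var_def order_ge_def)
  then show "max_ideal \<subseteq> {f :: ('v, 'k) mpoly. Poly_Mapping.lookup f 0 = 0}"
    unfolding max_ideal_def order_ge_1_eq[symmetric]
    by (intro ideal_gen_minimal is_ideal_order_ge)
next
  show "{f :: ('v, 'k) mpoly. Poly_Mapping.lookup f 0 = 0} \<subseteq> max_ideal"
  proof
    fix f :: "('v, 'k) mpoly"
    assume "f \<in> {f. Poly_Mapping.lookup f 0 = 0}"
    then have "\<alpha> \<noteq> 0" if "\<alpha> \<in> Poly_Mapping.keys f" for \<alpha>
      using that by (auto simp: in_keys_iff)
    then have "(\<Sum>\<alpha>\<in>Poly_Mapping.keys f. Poly_Mapping.single \<alpha> (Poly_Mapping.lookup f \<alpha>)) \<in> max_ideal"
      by (intro ideal_sum[OF is_ideal_max_ideal] single_mem_max_ideal)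
    then show "f \<in> max_ideal"
      by (simp only: sum_single_lookup_keys)
  qed
qed

lemma max_ideal_eq_order_ge_1: "(max_ideal :: ('v::finite, 'k::field) mpoly set) = order_ge 1"
  unfolding max_ideal_eq order_ge_1_eq ..

lemma prime_ideal_max_ideal: "prime_ideal (max_ideal :: ('v::finite, 'k::field) mpoly set)"
proof -
  have "is_ideal (max_ideal :: ('v, 'k) mpoly set)"
    by (rule is_ideal_max_ideal)
  moreover have "(1 :: ('v, 'k) mpoly) \<notin> max_ideal"
    by (simp add: max_ideal_eq)
  moreover have "a * b \<in> max_ideal \<Longrightarrow> a \<in> max_ideal \<or> b \<in> max_ideal" for a b :: "('v, 'k) mpoly"
    by (simp add: max_ideal_eq lookup_mult_zero)
  ultimately show ?thesis
    unfolding prime_ideal_def by blast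
qed

lemma max_ideal_maximal:
  fixes P :: "('v::finite, 'k::field) mpoly set"
  assumes P: "is_ideal P" "max_ideal \<subseteq> P" "P \<noteq> UNIV"
  shows "P = max_ideal"
proof (rule ccontr)
  assume "P \<noteq> max_ideal"
  then obtain p where p: "p \<in> P" "Poly_Mapping.lookup p 0 \<noteq> 0"
    using P(2) max_ideal_eq by blast
  define c where "c = Poly_Mapping.lookup p 0"
  have "p - Poly_Mapping.single 0 c \<in> max_ideal"
    by (simp add: max_ideal_eq lookup_minus c_def)
  then have "p - (p - Poly_Mapping.single 0 c) \<in> P"
    using P p ideal_diff by blast
  then have "Poly_Mapping.single 0 (1 / c) * Poly_Mapping.single 0 c \<in> P"
    using P ideal_mult_left by simp
  moreover have "Poly_Mapping.single 0 (1 / c) * Poly_Mapping.single 0 c = (1 :: ('v, 'k) mpoly)"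
    using p(2) by (simp add: mult_single c_def)
  ultimately show False
    using P ideal_eq_UNIV_if_one_mem by auto
qed

lemma var_powers_mem_if_radical_eq_max_ideal:
  fixes I :: "('v::finite, 'k::field) mpoly set"
  assumes "is_ideal I" "radical I = max_ideal"
  shows "\<exists>N. \<forall>v. var v ^ N \<in> I"
proof -
  have "var v \<in> radical I" for v
    using assms(2) var_mem_max_ideal by simp
  then have "\<forall>v. \<exists>m. var v ^ m \<in> I"
    unfolding radical_def by simp
  then obtain n where n: "\<And>v. var v ^ n v \<in> I"
    by metis
  have "var v ^ (\<Sum>w\<in>UNIV. n w) \<in> I" for v
  proof -
    have "n v \<le> (\<Sum>w\<in>UNIV. n w)"
      by (rule member_le_sum) auto
    then obtain d where "(\<Sum>w\<in>UNIV. n w) = n v + d"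
      using le_iff_add by blast
    then show ?thesis
      using ideal_mult_right[OF assms(1) n] by (simp add: power_add)
  qed
  then show ?thesis by blast
qed

lemma monomial_mem_if_var_powers_mem:
  fixes J :: "('v::finite, 'k::field) mpoly set"
  assumes "is_ideal J" "\<And>v. var v ^ N \<in> J" "card (UNIV :: 'v set) * N \<le> mono_deg \<alpha>"
  shows "Poly_Mapping.single \<alpha> 1 \<in> J"
proof -
  obtain v where "N \<le> Poly_Mapping.lookup \<alpha> v"
    using exists_lookup_ge_if_mono_deg_ge[OF assms(3)] by blast
  then have split:
    "Poly_Mapping.single \<alpha> 1 = Poly_Mapping.single (\<alpha> - Poly_Mapping.single v N) 1 * var v ^ N"
    by (rule monomial_eq_times_var_power)
  show ?thesis
    unfolding split by (rule ideal_mult_left[OF assms(1,2)])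
qed

lemma exists_monomial_colon_eq_max_ideal:
  fixes J :: "('v::finite, 'k::field) mpoly set"
  assumes J: "is_ideal J" "1 \<notin> J" and powers: "\<And>v. var v ^ N \<in> J"
  shows "\<exists>\<alpha>. colon J (Poly_Mapping.single \<alpha> 1) = max_ideal"
proof -
  define degs where "degs = {mono_deg \<alpha> | \<alpha>. Poly_Mapping.single \<alpha> 1 \<notin> J}"
  have mem_degs: "d \<in> degs \<longleftrightarrow> (\<exists>\<alpha>. d = mono_deg \<alpha> \<and> Poly_Mapping.single \<alpha> 1 \<notin> J)" for d
    unfolding degs_def by blast
  have "0 \<in> degs"
    unfolding mem_degs using J(2) by (auto intro!: exI[of _ 0] simp: mono_deg_eq_0_iff)
  have "degs \<subseteq> {..<card (UNIV :: 'v set) * N}"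
  proof
    fix d assume "d \<in> degs"
    then obtain \<beta> where "d = mono_deg \<beta>" "Poly_Mapping.single \<beta> 1 \<notin> J"
      unfolding mem_degs by blast
    then show "d \<in> {..<card (UNIV :: 'v set) * N}"
      using monomial_mem_if_var_powers_mem[OF J(1) powers, of \<beta>] by fastforce
  qed
  then have "finite degs"
    by (rule finite_subset) simp
  moreover have "degs \<noteq> {}"
    using \<open>0 \<in> degs\<close> by blast
  ultimately have "Max degs \<in> degs"
    by (rule Max_in)
  then obtain \<alpha> where \<alpha>: "Max degs = mono_deg \<alpha>" "Poly_Mapping.single \<alpha> 1 \<notin> J"
    unfolding mem_degs by blast
  have "var v \<in> colon J (Poly_Mapping.single \<alpha> 1)" for v
  proof -
    have "Max degs < mono_deg (\<alpha> + Poly_Mapping.single v 1)"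
      using \<alpha>(1) by (simp add: mono_deg_add)
    then have "mono_deg (\<alpha> + Poly_Mapping.single v 1) \<notin> degs"
      using Max_ge[OF \<open>finite degs\<close>] by (meson not_le)
    then have "Poly_Mapping.single (\<alpha> + Poly_Mapping.single v 1) 1 \<in> J"
      unfolding mem_degs by blast
    then show ?thesis
      unfolding colon_def var_def by (simp add: mult_single add.commute)
  qed
  then have "max_ideal \<subseteq> colon J (Poly_Mapping.single \<alpha> 1)"
    unfolding max_ideal_def by (intro ideal_gen_minimal is_ideal_colon J(1)) auto
  moreover have "colon J (Poly_Mapping.single \<alpha> 1) \<noteq> UNIV"
  proof
    assume "colon J (Poly_Mapping.single \<alpha> 1) = UNIV"
    then have "1 \<in> colon J (Poly_Mapping.single \<alpha> 1)"
      by simp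
    with \<alpha>(2) show False
      by (simp add: colon_def)
  qed
  ultimately show ?thesis
    by (intro exI[of _ \<alpha>] max_ideal_maximal is_ideal_colon J(1))
qed

lemma degree_ge_if_colon_prime:
  fixes J :: "('v::finite, 'k::field) mpoly set"
  assumes J: "is_ideal J" "J \<subseteq> order_ge (Suc n)" "var v ^ M \<in> J"
    and f: "homogeneous k f" "prime_ideal (colon J f)"
  shows "n \<le> k"
proof -
  have "f \<noteq> 0"
    using f(2) ideal_zero[OF J(1)] unfolding colon_def prime_ideal_def by auto
  then obtain \<beta> where \<beta>: "\<beta> \<in> Poly_Mapping.keys f"
    by fastforce
  have "var v \<in> colon J f"
    using J(3) ideal_subset_colon[OF J(1)] prime_ideal_power_mem[OF f(2)] by blast
  then have "var v * f \<in> order_ge (Suc n)"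
    using J(2) unfolding colon_def by (auto simp: mult.commute)
  moreover have "Poly_Mapping.single v 1 + \<beta> \<in> Poly_Mapping.keys (var v * f)"
    using \<beta> lookup_var_mult[of v f \<beta>] by (simp add: in_keys_iff)
  ultimately have "Suc n \<le> mono_deg (Poly_Mapping.single v 1 + \<beta>)"
    unfolding order_ge_def by blast
  with f(1) \<beta> show ?thesis
    unfolding homogeneous_def by (simp add: mono_deg_add)
qed

lemma v_number_ge_if_subset_order_ge:
  fixes J :: "('v::finite, 'k::field) mpoly set"
  assumes J: "is_ideal J" "J \<subseteq> order_ge (Suc n)" and powers: "\<And>v. var v ^ N \<in> J"
  shows "n \<le> v_number J"
proof -
  let ?attained = "\<lambda>k. \<exists>f P. homogeneous k f \<and> P \<in> Ass J \<and> colon J f = P"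
  obtain \<alpha> where "colon J (Poly_Mapping.single \<alpha> 1) = max_ideal"
    using exists_monomial_colon_eq_max_ideal[OF J(1) _ powers] J(2) one_not_in_order_ge by blast
  then have "?attained (mono_deg \<alpha>)"
    using prime_ideal_max_ideal unfolding Ass_def homogeneous_def
    by (intro exI[of _ "Poly_Mapping.single \<alpha> 1"] exI[of _ max_ideal]) auto
  then have "?attained (v_number J)"
    unfolding v_number_def by (rule LeastI)
  then obtain f where "homogeneous (v_number J) f" "prime_ideal (colon J f)"
    by (auto simp: Ass_def)
  then show ?thesis
    by (rule degree_ge_if_colon_prime[OF J powers])
qed

theorem proposition4p5:
  fixes I :: "('v::finite, 'k::field) mpoly set"
  assumes "monomial_ideal I" and "m_primary I"
  shows "\<exists>s0. \<forall>s\<ge>s0. v_number (ideal_pow I (s + 1)) \<ge> v_number I"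
proof -
  have I: "is_ideal I" and rad: "radical I = max_ideal"
    using assms(2) unfolding m_primary_def primary_ideal_def by auto
  have "I \<subseteq> order_ge 1"
    unfolding max_ideal_eq_order_ge_1[symmetric] rad[symmetric] radical_def
    by (auto intro: exI[of _ 1])
  obtain N where N: "\<And>v. var v ^ N \<in> I"
    using var_powers_mem_if_radical_eq_max_ideal[OF I rad] by blast
  have "s \<le> v_number (ideal_pow I (s + 1))" for s
  proof (rule v_number_ge_if_subset_order_ge)
    show "ideal_pow I (s + 1) \<subseteq> order_ge (Suc s)"
      using ideal_pow_subset_order_ge[OF \<open>I \<subseteq> order_ge 1\<close>, of "Suc s"]
      by (simp del: ideal_pow.simps)
    show "var v ^ (N * (s + 1)) \<in> ideal_pow I (s + 1)" for v
      unfolding power_mult using power_mem_ideal_pow[OF N] .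
  qed (rule is_ideal_ideal_pow)
  then show ?thesis
    using order_trans by blast
qed

end
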